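(* Let $R$ be a mixed characteristic dp-minimal DVR and let $S$ be a finite-index subring of $R$. Then $S$ is dp-minimal and Noetherian.
   Context: Rings are commutative and unital; a ring is dp-minimal if $(R,+,\cdot)$ has dp-rank $1$. A DVR is a discrete valuation ring; a dp-minimal DVR has fraction field of characteristic $0$, and it is called mixed characteristic if its residue field is finite. A finite-index subring of $R$ is a subring $S\subseteq R$ of finite index in the additive group $(R,+)$. *)

theory Defs
  imports "HOL-Algebra.Algebra"
begin

datatype rterm = RVar nat | RZero | ROne | RAdd rterm rterm | RMul rterm rterm | RNeg rterm

datatype rform = REq rterm rterm | RNot rform | RAnd rform rform | ROr rform rform
  | RExists nat rform | RForall nat rform

fun rterm_eval :: "('a, 'b) ring_scheme \<Rightarrow> (nat \<Rightarrow> 'a) \<Rightarrow> rterm \<Rightarrow> 'a" where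
  "rterm_eval R e (RVar k) = e k"
| "rterm_eval R e RZero = \<zero>\<^bsub>R\<^esub>"
| "rterm_eval R e ROne = \<one>\<^bsub>R\<^esub>"
| "rterm_eval R e (RAdd s t) = rterm_eval R e s \<oplus>\<^bsub>R\<^esub> rterm_eval R e t"
| "rterm_eval R e (RMul s t) = rterm_eval R e s \<otimes>\<^bsub>R\<^esub> rterm_eval R e t"
| "rterm_eval R e (RNeg s) = \<ominus>\<^bsub>R\<^esub> rterm_eval R e s"

fun rsat :: "('a, 'b) ring_scheme \<Rightarrow> (nat \<Rightarrow> 'a) \<Rightarrow> rform \<Rightarrow> bool" where
  "rsat R e (REq s t) = (rterm_eval R e s = rterm_eval R e t)"
| "rsat R e (RNot f) = (\<not> rsat R e f)"
| "rsat R e (RAnd f g) = (rsat R e f \<and> rsat R e g)"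
| "rsat R e (ROr f g) = (rsat R e f \<or> rsat R e g)"
| "rsat R e (RExists k f) = (\<exists>a\<in>carrier R. rsat R (e(k := a)) f)"
| "rsat R e (RForall k f) = (\<forall>a\<in>carrier R. rsat R (e(k := a)) f)"

text \<open>An ICT pattern of depth 2 for the singleton variable x (= variable 0), with formulas
  phi(x;y), psi(x;z) whose remaining free variables are parameters. By compactness, such a
  pattern exists in the monster model iff for every n a finite n-by-n pattern exists in the
  structure itself; we use this finitary formulation.\<close>
definition ict2 :: "('a, 'b) ring_scheme \<Rightarrow> bool" where
  "ict2 R \<longleftrightarrow> (\<exists>\<phi> \<psi>. \<forall>n::nat. \<exists>A B :: nat \<Rightarrow> nat \<Rightarrow> 'a.
      (\<forall>i<n. \<forall>k. A i k \<in> carrier R) \<and> (\<forall>j<n. \<forall>k. B j k \<in> carrier R) \<and>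
      (\<forall>i<n. \<forall>j<n. \<exists>c\<in>carrier R. \<forall>i'<n. \<forall>j'<n.
          (rsat R ((A i')(0 := c)) \<phi> \<longleftrightarrow> i' = i) \<and>
          (rsat R ((B j')(0 := c)) \<psi> \<longleftrightarrow> j' = j)))"

text \<open>dp-rank 1: no ICT pattern of depth 2, and (infinite universe, i.e.) dp-rank not 0.\<close>
definition dp_minimal :: "('a, 'b) ring_scheme \<Rightarrow> bool" where
  "dp_minimal R \<longleftrightarrow> infinite (carrier R) \<and> \<not> ict2 R"

definition DVR :: "('a, 'b) ring_scheme \<Rightarrow> bool" where
  "DVR R \<longleftrightarrow> principal_domain R \<and> \<not> field R \<and> (\<exists>!m. maximalideal m R)"

definition mixed_char_DVR :: "('a, 'b) ring_scheme \<Rightarrow> bool" where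
  "mixed_char_DVR R \<longleftrightarrow> DVR R \<and> (\<forall>m. maximalideal m R \<longrightarrow> finite (a_rcosets\<^bsub>R\<^esub> m))"

definition finite_index_subring :: "'a set \<Rightarrow> ('a, 'b) ring_scheme \<Rightarrow> bool" where
  "finite_index_subring S R \<longleftrightarrow> subring S R \<and> finite (a_rcosets\<^bsub>R\<^esub> S)"

end

theory Submission
  imports Defs
begin

text \<open>The conductor of S, the largest R-ideal contained in S, has finite index in R, so it is a
  nonzero principal ideal p R, and S is a finite union of cosets of p R. Hence S is definable in
  R with parameters, and relativizing formulas to S turns an ICT pattern of depth 2 in S into
  one in R. For Noetherianity, a nonzero ideal J of S contains (a p) R for every nonzero a in J.
  This ideal has finite index, since a p is a product of irreducibles, each generating a maximal
  ideal of finite index; so J is generated by finitely many representatives of J modulo (a p) R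
  together with the elements a p t, where t runs through 1 and representatives of R modulo S.\<close>

section \<open>Subgroups of finite index\<close>

definition finite_index :: "('a, 'b) ring_scheme \<Rightarrow> 'a set \<Rightarrow> bool" where
  "finite_index R H \<longleftrightarrow>
     (\<exists>F. finite F \<and> F \<subseteq> carrier R \<and> (\<forall>r\<in>carrier R. \<exists>f\<in>F. r \<ominus>\<^bsub>R\<^esub> f \<in> H))"

context ring begin

lemma subring_additive_subgroup: "subring S R \<Longrightarrow> additive_subgroup S R"
  by (simp add: additive_subgroupI subring.axioms(1) is_abelian_group)

lemma finite_representatives_if_finite_image:
  assumes "finite (g ` K)"
    and "\<And>x y. \<lbrakk>x \<in> K; y \<in> K; g x = g y\<rbrakk> \<Longrightarrow> x \<ominus> y \<in> H"
  shows "\<exists>F. finite F \<and> F \<subseteq> K \<and> (\<forall>x\<in>K. \<exists>f\<in>F. x \<ominus> f \<in> H)"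
proof (intro exI conjI ballI)
  let ?F = "inv_into K g ` g ` K"
  show "finite ?F" "?F \<subseteq> K"
    using assms(1) by (auto intro: inv_into_into)
  fix x assume "x \<in> K"
  then have "x \<ominus> inv_into K g (g x) \<in> H"
    by (intro assms(2)) (auto intro: inv_into_into simp: f_inv_into_f)
  with \<open>x \<in> K\<close> show "\<exists>f\<in>?F. x \<ominus> f \<in> H" by blast
qed

lemma a_rcos_eq_imp_minus:
  assumes "additive_subgroup H R" "x \<in> carrier R" "y \<in> carrier R" "H +> x = H +> y"
  shows "x \<ominus> y \<in> H"
proof -
  interpret H: abelian_subgroup H R
    using abelian_subgroupI3[OF assms(1)] is_abelian_group .
  show ?thesis
    using H.a_rcos_self[OF assms(2)] H.a_rcos_module_minus[OF ring_axioms assms(3,2)] assms(4)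
    by simp
qed

lemma finite_index_if_finite_a_rcosets:
  assumes "additive_subgroup H R" "finite (a_rcosets H)"
  shows "finite_index R H"
proof -
  have "finite ((\<lambda>x. H +> x) ` carrier R)"
    using assms(2) by (simp add: A_RCOSETS_def RCOSETS_def a_r_coset_def UNION_singleton_eq_range)
  then show ?thesis
    unfolding finite_index_def
    using finite_representatives_if_finite_image a_rcos_eq_imp_minus[OF assms(1)] by blast
qed

lemma finite_representatives_in_subset:
  assumes H: "additive_subgroup H R" "finite_index R H" and K: "K \<subseteq> carrier R"
  shows "\<exists>F. finite F \<and> F \<subseteq> K \<and> (\<forall>x\<in>K. \<exists>f\<in>F. x \<ominus> f \<in> H)"
proof (rule finite_representatives_if_finite_image)
  interpret H: abelian_subgroup H R
    using abelian_subgroupI3[OF H(1)] is_abelian_group .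
  obtain F0 where F0: "finite F0" "F0 \<subseteq> carrier R" "\<And>r. r \<in> carrier R \<Longrightarrow> \<exists>f\<in>F0. r \<ominus> f \<in> H"
    using H(2) unfolding finite_index_def by blast
  have "(\<lambda>x. H +> x) ` K \<subseteq> (\<lambda>f. H +> f) ` F0"
  proof
    fix C assume "C \<in> (\<lambda>x. H +> x) ` K"
    then obtain x where x: "x \<in> K" "C = H +> x" by blast
    then obtain f where f: "f \<in> F0" "x \<ominus> f \<in> H" using F0(3) K by blast
    then have "x \<in> H +> f"
      using H.a_rcos_module_minus[OF ring_axioms] F0(2) x K by blast
    then have "H +> f = H +> x" using H.a_repr_independence' F0(2) f(1) by blast
    with f(1) x(2) show "C \<in> (\<lambda>f. H +> f) ` F0" by blast
  qed
  then show "finite ((\<lambda>x. H +> x) ` K)" using F0(1) finite_surj by blast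
  show "\<And>x y. \<lbrakk>x \<in> K; y \<in> K; H +> x = H +> y\<rbrakk> \<Longrightarrow> x \<ominus> y \<in> H"
    using a_rcos_eq_imp_minus[OF H(1)] K by blast
qed

lemma infinite_if_finite_index:
  assumes "finite_index R H" "infinite (carrier R)"
  shows "infinite H"
proof
  assume "finite H"
  obtain F where F: "finite F" "F \<subseteq> carrier R" "\<And>r. r \<in> carrier R \<Longrightarrow> \<exists>f\<in>F. r \<ominus> f \<in> H"
    using assms(1) unfolding finite_index_def by blast
  have "carrier R \<subseteq> (\<lambda>(h, f). h \<oplus> f) ` (H \<times> F)"
  proof
    fix r assume r: "r \<in> carrier R"
    then obtain f where f: "f \<in> F" "r \<ominus> f \<in> H" using F(3) by blast
    have "f \<in> carrier R" using f(1) F(2) by blast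
    with r have "r = (r \<ominus> f) \<oplus> f" by algebra
    with f show "r \<in> (\<lambda>(h, f). h \<oplus> f) ` (H \<times> F)" by force
  qed
  with \<open>finite H\<close> F(1) assms(2) show False by (meson finite_SigmaI finite_imageI finite_subset)
qed

end

section \<open>The conductor of a subring\<close>

definition conductor :: "('a, 'b) ring_scheme \<Rightarrow> 'a set \<Rightarrow> 'a set" where
  "conductor R S = {r \<in> carrier R. \<forall>x\<in>carrier R. r \<otimes>\<^bsub>R\<^esub> x \<in> S}"

context cring begin

lemma conductor_subset: "conductor R S \<subseteq> S"
proof
  fix r assume "r \<in> conductor R S"
  then have "r \<in> carrier R" "r \<otimes> \<one> \<in> S" unfolding conductor_def using one_closed by blast+
  then show "r \<in> S" by simp
qed

lemma conductor_ideal: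
  assumes sub: "subring S R"
  shows "ideal (conductor R S) R"
proof (rule idealI)
  show "subgroup (conductor R S) (add_monoid R)"
  proof (rule add.subgroupI)
    show "conductor R S \<subseteq> carrier R" "conductor R S \<noteq> {}"
      using subringE(2)[OF sub] unfolding conductor_def by auto
  next
    fix a b assume "a \<in> conductor R S" "b \<in> conductor R S"
    then show "\<ominus> a \<in> conductor R S" "a \<oplus> b \<in> conductor R S"
      unfolding conductor_def by (auto simp: l_minus l_distr intro: subringE(5,7)[OF sub])
  qed
next
  fix a x assume "a \<in> conductor R S" "x \<in> carrier R"
  then show "a \<otimes> x \<in> conductor R S" "x \<otimes> a \<in> conductor R S"
    unfolding conductor_def by (auto simp: m_assoc m_lcomm)
qed (rule ring_axioms)

lemma mem_conductorI:
  assumes sub: "subring S R"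
    and T: "T \<subseteq> carrier R" "\<And>x. x \<in> carrier R \<Longrightarrow> \<exists>t\<in>T. x \<ominus> t \<in> S"
    and r: "r \<in> carrier R" "r \<in> S" "\<And>t. t \<in> T \<Longrightarrow> r \<otimes> t \<in> S"
  shows "r \<in> conductor R S"
  unfolding conductor_def
proof (intro CollectI conjI ballI)
  fix x assume x: "x \<in> carrier R"
  then obtain t where t: "t \<in> T" "x \<ominus> t \<in> S" using T(2) by blast
  have "t \<in> carrier R" using t(1) T(1) by blast
  with r(1) x have "r \<otimes> x = r \<otimes> t \<oplus> r \<otimes> (x \<ominus> t)" by algebra
  then show "r \<otimes> x \<in> S" using r t subringE(6,7)[OF sub] by simp
qed (fact r(1))

lemma finite_index_conductor:
  assumes sub: "subring S R" and fin: "finite (a_rcosets S)"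
  shows "finite_index R (conductor R S)"
proof -
  have S_sub: "additive_subgroup S R" using subring_additive_subgroup[OF sub] .
  obtain T where T: "finite T" "T \<subseteq> carrier R" "\<And>x. x \<in> carrier R \<Longrightarrow> \<exists>t\<in>T. x \<ominus> t \<in> S"
    using finite_index_if_finite_a_rcosets[OF S_sub fin] unfolding finite_index_def by blast
  define \<sigma> where "\<sigma> r = (\<lambda>t\<in>insert \<one> T. S +> r \<otimes> t)" for r
  have "\<sigma> ` carrier R \<subseteq> PiE (insert \<one> T) (\<lambda>_. a_rcosets S)"
    using T(2) subringE(1)[OF sub] by (auto simp: \<sigma>_def intro!: a_rcosetsI m_closed)
  moreover have "finite (PiE (insert \<one> T) (\<lambda>_. a_rcosets S))"
    using T(1) fin by (simp add: finite_PiE)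
  ultimately have "finite (\<sigma> ` carrier R)" by (rule finite_subset)
  moreover have "r \<ominus> r' \<in> conductor R S"
    if r: "r \<in> carrier R" "r' \<in> carrier R" and \<sigma>: "\<sigma> r = \<sigma> r'" for r r'
  proof -
    have diff: "(r \<ominus> r') \<otimes> t \<in> S" if t: "t \<in> insert \<one> T" for t
    proof -
      have t_carr: "t \<in> carrier R" using t T(2) by blast
      have "S +> r \<otimes> t = S +> r' \<otimes> t" using fun_cong[OF \<sigma>, of t] t by (simp add: \<sigma>_def)
      then have "r \<otimes> t \<ominus> r' \<otimes> t \<in> S"
        using a_rcos_eq_imp_minus[OF S_sub] r t_carr by simp
      moreover have "r \<otimes> t \<ominus> r' \<otimes> t = (r \<ominus> r') \<otimes> t"
        using r t_carr by algebra
      ultimately show ?thesis by simp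
    qed
    have "r \<ominus> r' \<in> S" using diff[of \<one>] r by simp
    with r diff show ?thesis
      by (intro mem_conductorI[OF sub T(2,3)]) auto
  qed
  ultimately show ?thesis
    unfolding finite_index_def by (rule finite_representatives_if_finite_image)
qed

end

section \<open>Principal ideals of finite index\<close>

context cring begin

lemma finite_index_carrier: "finite_index R (carrier R)"
  unfolding finite_index_def by (intro exI[of _ "{\<zero>}"]) auto

lemma finite_index_PIdl_mult:
  assumes y: "y \<in> carrier R" and z: "z \<in> carrier R"
    and fin: "finite_index R (PIdl y)" "finite_index R (PIdl z)"
  shows "finite_index R (PIdl (y \<otimes> z))"
proof -
  obtain Fy where Fy: "finite Fy" "Fy \<subseteq> carrier R" "\<And>r. r \<in> carrier R \<Longrightarrow> \<exists>f\<in>Fy. r \<ominus> f \<in> PIdl y"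
    using fin(1) unfolding finite_index_def by blast
  obtain Fz where Fz: "finite Fz" "Fz \<subseteq> carrier R" "\<And>r. r \<in> carrier R \<Longrightarrow> \<exists>g\<in>Fz. r \<ominus> g \<in> PIdl z"
    using fin(2) unfolding finite_index_def by blast
  let ?F = "(\<lambda>(f, g). f \<oplus> y \<otimes> g) ` (Fy \<times> Fz)"
  have "\<exists>h\<in>?F. r \<ominus> h \<in> PIdl (y \<otimes> z)" if r: "r \<in> carrier R" for r
  proof -
    obtain f s where f: "f \<in> Fy" and s: "s \<in> carrier R" "r \<ominus> f = s \<otimes> y"
      using Fy(3)[OF r] unfolding cgenideal_def by blast
    obtain g u where g: "g \<in> Fz" and u: "u \<in> carrier R" "s \<ominus> g = u \<otimes> z"
      using Fz(3)[OF s(1)] unfolding cgenideal_def by blast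
    have fg: "f \<in> carrier R" "g \<in> carrier R" using f g Fy(2) Fz(2) by auto
    have "r \<ominus> (f \<oplus> y \<otimes> g) = (r \<ominus> f) \<ominus> y \<otimes> g"
      using r y fg by algebra
    also have "\<dots> = (s \<ominus> g) \<otimes> y"
      unfolding s(2) using s(1) y fg by algebra
    also have "\<dots> = u \<otimes> (y \<otimes> z)"
      unfolding u(2) using u(1) y z by algebra
    finally have "r \<ominus> (f \<oplus> y \<otimes> g) \<in> PIdl (y \<otimes> z)"
      using u(1) unfolding cgenideal_def by blast
    with f g show ?thesis by force
  qed
  moreover have "finite ?F" "?F \<subseteq> carrier R"
    using Fy(1,2) Fz(1,2) y by (auto simp: subset_iff)
  ultimately show ?thesis unfolding finite_index_def by (intro exI[of _ ?F]) auto
qed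

end

context principal_domain begin

lemma finite_index_PIdl_prod_irreducibles:
  assumes max: "\<And>m. maximalideal m R \<Longrightarrow> finite_index R m"
  shows "\<lbrakk>set fs \<subseteq> carrier R - {\<zero>}; \<forall>x\<in>set fs. irreducible (mult_of R) x\<rbrakk>
      \<Longrightarrow> finite_index R (PIdl (foldr (\<otimes>) fs \<one>))"
proof (induction fs)
  case Nil
  then show ?case using ideal_eq_carrier_iff[of \<one>] finite_index_carrier by simp
next
  case (Cons x fs)
  then have x: "x \<in> carrier R - {\<zero>}" "irreducible (mult_of R) x" and fs: "set fs \<subseteq> carrier R"
    by auto
  then have "maximalideal (PIdl x) R"
    using irreducible_imp_maximalideal ring_irreducibleI' by blast
  with Cons x fs show ?case
    using finite_index_PIdl_mult[OF _ multlist_closed[OF fs]] max by simp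
qed

lemma finite_index_PIdl:
  assumes max: "\<And>m. maximalideal m R \<Longrightarrow> finite_index R m"
    and a: "a \<in> carrier R" "a \<noteq> \<zero>"
  shows "finite_index R (PIdl a)"
proof (cases "a \<in> Units R")
  case True
  then show ?thesis using ideal_eq_carrier_iff[OF a(1)] finite_index_carrier by simp
next
  case False
  then obtain fs where fs: "set fs \<subseteq> carrier (mult_of R)" "wfactors (mult_of R) fs a"
    using factorization_property[of a] a by blast
  then have fs_carr: "set fs \<subseteq> carrier R - {\<zero>}" by auto
  then have prod: "foldr (\<otimes>) fs \<one> \<in> carrier R" by (intro multlist_closed) auto
  have "foldr (\<otimes>) fs \<one> \<sim> a"
    using fs(2) assoc_iff_assoc_mult[OF prod a(1)] unfolding wfactors_def by auto
  then have "PIdl (foldr (\<otimes>) fs \<one>) = PIdl a"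
    using associated_iff_same_ideal[OF prod a(1)] by simp
  moreover have "finite_index R (PIdl (foldr (\<otimes>) fs \<one>))"
    using finite_index_PIdl_prod_irreducibles[OF max fs_carr] fs(2) unfolding wfactors_def by blast
  ultimately show ?thesis by simp
qed

end

section \<open>Noetherianity of subrings of finite index\<close>

lemma ideal_carrier_updateD:
  assumes "ideal J (R\<lparr>carrier := S\<rparr>)"
  shows "J \<subseteq> S" "\<zero>\<^bsub>R\<^esub> \<in> J"
    and "\<And>a b. \<lbrakk>a \<in> J; b \<in> J\<rbrakk> \<Longrightarrow> a \<oplus>\<^bsub>R\<^esub> b \<in> J"
    and "\<And>a s. \<lbrakk>a \<in> J; s \<in> S\<rbrakk> \<Longrightarrow> a \<otimes>\<^bsub>R\<^esub> s \<in> J"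
  using ideal.Icarr[OF assms] additive_subgroup.zero_closed[OF ideal.axioms(1)[OF assms]]
    additive_subgroup.a_closed[OF ideal.axioms(1)[OF assms]] ideal.I_r_closed[OF assms]
  by auto

context cring begin

lemma PIdl_subset_subring_ideal:
  assumes T: "T \<subseteq> carrier R" "\<And>x. x \<in> carrier R \<Longrightarrow> \<exists>t\<in>T. x \<ominus> t \<in> S"
    and J: "ideal J (R\<lparr>carrier := S\<rparr>)"
    and q: "q \<in> carrier R" "\<And>t. t \<in> insert \<one> T \<Longrightarrow> q \<otimes> t \<in> J"
  shows "PIdl q \<subseteq> J"
proof
  fix z assume "z \<in> PIdl q"
  then obtain y where y: "y \<in> carrier R" "z = y \<otimes> q" unfolding cgenideal_def by blast
  obtain t where t: "t \<in> T" "y \<ominus> t \<in> S" using T(2) y(1) by blast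
  have "t \<in> carrier R" using t(1) T(1) by blast
  then have "z = q \<otimes> t \<oplus> (q \<otimes> \<one>) \<otimes> (y \<ominus> t)"
    unfolding y(2) using y(1) q(1) by algebra
  moreover have "q \<otimes> t \<in> J" "q \<otimes> \<one> \<in> J" using q(2) t(1) by auto
  ultimately show "z \<in> J" using ideal_carrier_updateD[OF J] t(2) by simp
qed

lemma subring_ideal_finitely_generated:
  assumes sub: "subring S R" "finite_index R S"
    and J: "ideal J (R\<lparr>carrier := S\<rparr>)"
    and q: "q \<in> carrier R" "PIdl q \<subseteq> J" "finite_index R (PIdl q)"
  shows "\<exists>A\<subseteq>S. finite A \<and> J = Idl\<^bsub>R\<lparr>carrier := S\<rparr>\<^esub> A"
proof -
  interpret S: ring "R\<lparr>carrier := S\<rparr>" using subring_is_ring[OF sub(1)] .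
  have J_S: "J \<subseteq> S" using ideal_carrier_updateD(1)[OF J] .
  have J_carr: "J \<subseteq> carrier R" using J_S subringE(1)[OF sub(1)] by blast
  obtain T where T: "finite T" "T \<subseteq> carrier R" "\<And>x. x \<in> carrier R \<Longrightarrow> \<exists>t\<in>T. x \<ominus> t \<in> S"
    using sub(2) unfolding finite_index_def by blast
  have "additive_subgroup (PIdl q) R" using cgenideal_ideal[OF q(1)] by (rule ideal.axioms(1))
  then obtain F where F: "finite F" "F \<subseteq> J" "\<And>x. x \<in> J \<Longrightarrow> \<exists>f\<in>F. x \<ominus> f \<in> PIdl q"
    using finite_representatives_in_subset[OF _ q(3) J_carr] by blast
  define A where "A = (\<lambda>t. q \<otimes> t) ` insert \<one> T \<union> F"
  have "(\<lambda>t. q \<otimes> t) ` insert \<one> T \<subseteq> PIdl q"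
    using q(1) T(2) cgenideal_self[OF q(1)] unfolding cgenideal_def by (auto simp: subset_iff m_comm)
  then have A_J: "A \<subseteq> J" using q(2) F(2) unfolding A_def by blast
  let ?I = "Idl\<^bsub>R\<lparr>carrier := S\<rparr>\<^esub> A"
  have A_S: "A \<subseteq> carrier (R\<lparr>carrier := S\<rparr>)" using A_J J_S by simp
  have I: "ideal ?I (R\<lparr>carrier := S\<rparr>)" using S.genideal_ideal[OF A_S] .
  have A_I: "A \<subseteq> ?I" using S.genideal_self[OF A_S] .
  have "PIdl q \<subseteq> ?I"
    using PIdl_subset_subring_ideal[OF T(2,3) I q(1)] A_I unfolding A_def by blast
  have "J \<subseteq> ?I"
  proof
    fix x assume x: "x \<in> J"
    then obtain f where f: "f \<in> F" "x \<ominus> f \<in> PIdl q" using F(3) by blast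
    have "x = f \<oplus> (x \<ominus> f)" using x f(1) F(2) J_carr by (auto simp: subset_iff) algebra
    moreover have "f \<in> ?I" using A_I f(1) unfolding A_def by blast
    ultimately show "x \<in> ?I"
      using ideal_carrier_updateD(3)[OF I] \<open>PIdl q \<subseteq> ?I\<close> f(2) by (metis subsetD)
  qed
  moreover have "?I \<subseteq> J" using S.genideal_minimal[OF J] A_J by simp
  ultimately have "J = ?I" by (rule subset_antisym)
  moreover have "finite A" unfolding A_def using F(1) T(1) by simp
  ultimately show ?thesis using A_J J_S by blast
qed

end

lemma (in principal_domain) noetherian_subring:
  assumes max: "\<And>m. maximalideal m R \<Longrightarrow> finite_index R m"
    and sub: "subring S R" "finite_index R S"
    and p: "p \<in> carrier R" "p \<noteq> \<zero>" "PIdl p \<subseteq> S"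
  shows "noetherian_ring (R\<lparr>carrier := S\<rparr>)"
proof -
  interpret S: ring "R\<lparr>carrier := S\<rparr>" using subring_is_ring[OF sub(1)] .
  show ?thesis
  proof (rule S.noetherian_ringI)
    fix J assume J: "ideal J (R\<lparr>carrier := S\<rparr>)"
    show "\<exists>A\<subseteq>carrier (R\<lparr>carrier := S\<rparr>). finite A \<and> J = Idl\<^bsub>R\<lparr>carrier := S\<rparr>\<^esub> A"
    proof (cases "J = {\<zero>}")
      case True
      then show ?thesis using S.genideal_zero subringE(2)[OF sub(1)] by auto
    next
      case False
      then obtain a where a: "a \<in> J" "a \<noteq> \<zero>" using ideal_carrier_updateD(2)[OF J] by blast
      have a_carr: "a \<in> carrier R" using a(1) ideal_carrier_updateD(1)[OF J] subringE(1)[OF sub(1)] by blast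
      have "PIdl (a \<otimes> p) \<subseteq> J"
      proof
        fix z assume "z \<in> PIdl (a \<otimes> p)"
        then obtain y where y: "y \<in> carrier R" "z = y \<otimes> (a \<otimes> p)" unfolding cgenideal_def by blast
        then have "z = a \<otimes> (y \<otimes> p)" using a_carr p(1) by (simp add: m_lcomm)
        moreover have "y \<otimes> p \<in> S" using y(1) p(3) unfolding cgenideal_def by blast
        ultimately show "z \<in> J" using ideal_carrier_updateD(4)[OF J a(1)] by simp
      qed
      moreover have "finite_index R (PIdl (a \<otimes> p))"
        using finite_index_PIdl[OF max] a_carr p(1,2) a(2) integral by blast
      ultimately show ?thesis
        using subring_ideal_finitely_generated[OF sub J m_closed[OF a_carr p(1)]] by simp
    qed
  qed
qed

section \<open>Relativization to definable subrings\<close>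

fun rterm_max_var :: "rterm \<Rightarrow> nat" where
  "rterm_max_var (RVar k) = k"
| "rterm_max_var RZero = 0"
| "rterm_max_var ROne = 0"
| "rterm_max_var (RAdd s t) = max (rterm_max_var s) (rterm_max_var t)"
| "rterm_max_var (RMul s t) = max (rterm_max_var s) (rterm_max_var t)"
| "rterm_max_var (RNeg s) = rterm_max_var s"

fun rform_max_var :: "rform \<Rightarrow> nat" where
  "rform_max_var (REq s t) = max (rterm_max_var s) (rterm_max_var t)"
| "rform_max_var (RNot f) = rform_max_var f"
| "rform_max_var (RAnd f g) = max (rform_max_var f) (rform_max_var g)"
| "rform_max_var (ROr f g) = max (rform_max_var f) (rform_max_var g)"
| "rform_max_var (RExists k f) = max k (rform_max_var f)"
| "rform_max_var (RForall k f) = max k (rform_max_var f)"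

fun rform_disj :: "rform list \<Rightarrow> rform" where
  "rform_disj [] = RNot (REq RZero RZero)"
| "rform_disj (f # fs) = ROr f (rform_disj fs)"

lemma rsat_rform_disj: "rsat R e (rform_disj fs) \<longleftrightarrow> (\<exists>f\<in>set fs. rsat R e f)"
  by (induction fs) auto

fun rform_relativize :: "(nat \<Rightarrow> rform) \<Rightarrow> rform \<Rightarrow> rform" where
  "rform_relativize \<theta> (REq s t) = REq s t"
| "rform_relativize \<theta> (RNot f) = RNot (rform_relativize \<theta> f)"
| "rform_relativize \<theta> (RAnd f g) = RAnd (rform_relativize \<theta> f) (rform_relativize \<theta> g)"
| "rform_relativize \<theta> (ROr f g) = ROr (rform_relativize \<theta> f) (rform_relativize \<theta> g)"
| "rform_relativize \<theta> (RExists k f) = RExists k (RAnd (\<theta> k) (rform_relativize \<theta> f))"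
| "rform_relativize \<theta> (RForall k f) = RForall k (ROr (RNot (\<theta> k)) (rform_relativize \<theta> f))"

definition with_params :: "nat \<Rightarrow> (nat \<Rightarrow> 'a) \<Rightarrow> (nat \<Rightarrow> 'a) \<Rightarrow> nat \<Rightarrow> 'a" where
  "with_params N P e x = (if x < N then e x else P x)"

lemma with_params_upd: "k < N \<Longrightarrow> (with_params N P e)(k := a) = with_params N P (e(k := a))"
  unfolding with_params_def by auto

lemma rterm_eval_cong:
  "(\<And>x. x \<le> rterm_max_var t \<Longrightarrow> e x = e' x) \<Longrightarrow> rterm_eval R e t = rterm_eval R e' t"
  by (induction t) auto

lemma (in ring) a_inv_carrier_update:
  assumes sub: "subring S R" and v: "v \<in> S"
  shows "\<ominus>\<^bsub>R\<lparr>carrier := S\<rparr>\<^esub> v = \<ominus> v"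
proof -
  interpret S: ring "R\<lparr>carrier := S\<rparr>" using subring_is_ring[OF sub] .
  have "v \<in> carrier R" using v subringE(1)[OF sub] by blast
  then show ?thesis
    using S.minus_equality[of "\<ominus> v" v] subringE(5)[OF sub v] v by (simp add: l_neg)
qed

lemma (in ring) rterm_eval_subring:
  assumes sub: "subring S R" and e: "\<And>x. e x \<in> S"
  shows "rterm_eval (R\<lparr>carrier := S\<rparr>) e t = rterm_eval R e t \<and> rterm_eval R e t \<in> S"
  by (induction t) (auto simp: e a_inv_carrier_update[OF sub] intro: subringE(2-3,5-7)[OF sub])

lemma (in ring) rsat_subring_iff_relativize:
  assumes sub: "subring S R"
    and \<theta>: "\<And>e k. \<lbrakk>k < N; e k \<in> carrier R\<rbrakk> \<Longrightarrow> rsat R (with_params N P e) (\<theta> k) \<longleftrightarrow> e k \<in> S"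
  shows "\<lbrakk>rform_max_var f < N; \<And>x. e x \<in> S\<rbrakk> \<Longrightarrow>
    rsat (R\<lparr>carrier := S\<rparr>) e f \<longleftrightarrow> rsat R (with_params N P e) (rform_relativize \<theta> f)"
proof (induction f arbitrary: e)
  case (REq s t)
  then have "rterm_eval R e u = rterm_eval R (with_params N P e) u" if "rterm_max_var u < N" for u
    using that by (intro rterm_eval_cong) (auto simp: with_params_def)
  with REq show ?case using rterm_eval_subring[OF sub REq(2)] by simp
next
  case (RExists k f)
  have "rsat (R\<lparr>carrier := S\<rparr>) (e(k := a)) f \<longleftrightarrow>
      rsat R (with_params N P (e(k := a))) (rform_relativize \<theta> f)" if "a \<in> S" for a
    using RExists.prems that by (intro RExists.IH) auto
  then show ?case
    using \<theta>[of k "e(k := _)"] RExists.prems(1) subringE(1)[OF sub] by (auto simp: with_params_upd)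
next
  case (RForall k f)
  have "rsat (R\<lparr>carrier := S\<rparr>) (e(k := a)) f \<longleftrightarrow>
      rsat R (with_params N P (e(k := a))) (rform_relativize \<theta> f)" if "a \<in> S" for a
    using RForall.prems that by (intro RForall.IH) auto
  then show ?case
    using \<theta>[of k "e(k := _)"] RForall.prems(1) subringE(1)[OF sub] by (auto simp: with_params_upd)
qed auto

definition ict2_pattern ::
    "('a, 'b) ring_scheme \<Rightarrow> rform \<Rightarrow> rform \<Rightarrow> nat \<Rightarrow> (nat \<Rightarrow> nat \<Rightarrow> 'a) \<Rightarrow> (nat \<Rightarrow> nat \<Rightarrow> 'a) \<Rightarrow> bool"
  where "ict2_pattern R \<phi> \<psi> n A B \<longleftrightarrow>
    (\<forall>i<n. \<forall>k. A i k \<in> carrier R) \<and> (\<forall>j<n. \<forall>k. B j k \<in> carrier R) \<and>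
    (\<forall>i<n. \<forall>j<n. \<exists>c\<in>carrier R. \<forall>i'<n. \<forall>j'<n.
        (rsat R ((A i')(0 := c)) \<phi> \<longleftrightarrow> i' = i) \<and> (rsat R ((B j')(0 := c)) \<psi> \<longleftrightarrow> j' = j))"

lemma ict2_iff_patterns: "ict2 R \<longleftrightarrow> (\<exists>\<phi> \<psi>. \<forall>n. \<exists>A B. ict2_pattern R \<phi> \<psi> n A B)"
  unfolding ict2_def ict2_pattern_def by (rule refl)

lemma (in ring) ict2_pattern_relativize:
  assumes sub: "subring S R" and P: "\<And>x. P x \<in> carrier R"
    and \<theta>: "\<And>e k. \<lbrakk>k < N; e k \<in> carrier R\<rbrakk> \<Longrightarrow> rsat R (with_params N P e) (\<theta> k) \<longleftrightarrow> e k \<in> S"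
    and vars: "rform_max_var \<phi> < N" "rform_max_var \<psi> < N"
    and pattern: "ict2_pattern (R\<lparr>carrier := S\<rparr>) \<phi> \<psi> n A B"
  shows "ict2_pattern R (rform_relativize \<theta> \<phi>) (rform_relativize \<theta> \<psi>) n
    (\<lambda>i. with_params N P (A i)) (\<lambda>j. with_params N P (B j))"
proof -
  have transfer: "rsat (R\<lparr>carrier := S\<rparr>) (e(0 := c)) f \<longleftrightarrow>
      rsat R ((with_params N P e)(0 := c)) (rform_relativize \<theta> f)"
    if "rform_max_var f < N" "\<forall>k. e k \<in> S" "c \<in> S" for e c f
    using rsat_subring_iff_relativize[OF sub \<theta>, where f = f and e = "e(0 := c)"] that
    by (simp add: with_params_upd)
  have A: "\<forall>i<n. \<forall>k. A i k \<in> S" and B: "\<forall>j<n. \<forall>k. B j k \<in> S"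
    and c: "\<forall>i<n. \<forall>j<n. \<exists>c\<in>S. \<forall>i'<n. \<forall>j'<n.
      (rsat (R\<lparr>carrier := S\<rparr>) ((A i')(0 := c)) \<phi> \<longleftrightarrow> i' = i) \<and>
      (rsat (R\<lparr>carrier := S\<rparr>) ((B j')(0 := c)) \<psi> \<longleftrightarrow> j' = j)"
    using pattern unfolding ict2_pattern_def by simp_all
  show ?thesis
    unfolding ict2_pattern_def
  proof (intro conjI allI impI)
    fix i j assume "i < n" "j < n"
    then obtain c where "c \<in> S" and sep: "\<forall>i'<n. \<forall>j'<n.
      (rsat (R\<lparr>carrier := S\<rparr>) ((A i')(0 := c)) \<phi> \<longleftrightarrow> i' = i) \<and>
      (rsat (R\<lparr>carrier := S\<rparr>) ((B j')(0 := c)) \<psi> \<longleftrightarrow> j' = j)"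
      using c by blast
    have "rsat R ((with_params N P (A i'))(0 := c)) (rform_relativize \<theta> \<phi>) \<longleftrightarrow> i' = i"
      and "rsat R ((with_params N P (B j'))(0 := c)) (rform_relativize \<theta> \<psi>) \<longleftrightarrow> j' = j"
      if "i' < n" "j' < n" for i' j'
      using sep transfer[OF vars(1), of "A i'" c] transfer[OF vars(2), of "B j'" c] A B \<open>c \<in> S\<close> that
      by simp_all
    with \<open>c \<in> S\<close> show "\<exists>c\<in>carrier R. \<forall>i'<n. \<forall>j'<n.
      (rsat R ((with_params N P (A i'))(0 := c)) (rform_relativize \<theta> \<phi>) \<longleftrightarrow> i' = i) \<and>
      (rsat R ((with_params N P (B j'))(0 := c)) (rform_relativize \<theta> \<psi>) \<longleftrightarrow> j' = j)"
      using subringE(1)[OF sub] by blast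
  qed (use A B P subringE(1)[OF sub] in \<open>auto simp: with_params_def\<close>)
qed

text \<open>\<open>\<theta> k\<close> defines S in the free variable k, reading its parameters from the variables x \<ge> N,
  where they take the values P x; N is chosen above the variables already in use.\<close>
definition definable_with_params :: "('a, 'b) ring_scheme \<Rightarrow> 'a set \<Rightarrow> bool" where
  "definable_with_params R S \<longleftrightarrow> (\<forall>N. \<exists>\<theta> P. (\<forall>x. P x \<in> carrier R) \<and>
     (\<forall>e k. k < N \<longrightarrow> e k \<in> carrier R \<longrightarrow> (rsat R (with_params N P e) (\<theta> k) \<longleftrightarrow> e k \<in> S)))"

lemma (in ring) ict2_if_ict2_definable_subring:
  assumes sub: "subring S R" and def: "definable_with_params R S"
    and ict: "ict2 (R\<lparr>carrier := S\<rparr>)"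
  shows "ict2 R"
proof -
  obtain \<phi> \<psi> where pattern: "\<And>n. \<exists>A B. ict2_pattern (R\<lparr>carrier := S\<rparr>) \<phi> \<psi> n A B"
    using ict unfolding ict2_iff_patterns by blast
  define N where "N = Suc (max (rform_max_var \<phi>) (rform_max_var \<psi>))"
  obtain \<theta> P where P: "\<And>x. P x \<in> carrier R"
    and \<theta>: "\<And>e k. \<lbrakk>k < N; e k \<in> carrier R\<rbrakk> \<Longrightarrow> rsat R (with_params N P e) (\<theta> k) \<longleftrightarrow> e k \<in> S"
    using def unfolding definable_with_params_def by metis
  have vars: "rform_max_var \<phi> < N" "rform_max_var \<psi> < N" unfolding N_def by auto
  have "\<exists>A B. ict2_pattern R (rform_relativize \<theta> \<phi>) (rform_relativize \<theta> \<psi>) n A B" for n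
    using pattern[of n] ict2_pattern_relativize[where P = P and N = N and \<theta> = \<theta>, OF sub P \<theta> vars]
    by blast
  then show ?thesis unfolding ict2_iff_patterns by blast
qed

lemma (in ring) minus_mem_PIdl_iff:
  assumes "x \<in> carrier R" "f \<in> carrier R" "p \<in> carrier R"
  shows "x \<ominus> f \<in> PIdl p \<longleftrightarrow> (\<exists>y\<in>carrier R. x = f \<oplus> y \<otimes> p)"
proof -
  have "x \<ominus> f = y \<otimes> p \<longleftrightarrow> x = f \<oplus> y \<otimes> p" if "y \<in> carrier R" for y
  proof
    assume h: "x \<ominus> f = y \<otimes> p"
    have "x = f \<oplus> (x \<ominus> f)" using assms(1,2) by algebra
    then show "x = f \<oplus> y \<otimes> p" unfolding h .
  next
    assume h: "x = f \<oplus> y \<otimes> p"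
    show "x \<ominus> f = y \<otimes> p" unfolding h using assms(2,3) that by algebra
  qed
  then show ?thesis unfolding cgenideal_def by auto
qed

lemma (in ring) definable_with_params_PIdl_cosets:
  assumes p: "p \<in> carrier R" and F: "finite F" "F \<subseteq> carrier R"
  shows "definable_with_params R {x \<in> carrier R. \<exists>f\<in>F. x \<ominus> f \<in> PIdl p}"
  unfolding definable_with_params_def
proof (intro allI)
  fix N
  obtain fs where fs: "set fs = F" using finite_list[OF F(1)] by blast
  define m where "m = length fs"
  define Y where "Y = N + 1 + m"
  define P where "P x = (if x = N then p else if N < x \<and> x - N - 1 < m then fs ! (x - N - 1) else \<zero>)"
    for x
  define E where "E k i = REq (RVar k) (RAdd (RVar (N + 1 + i)) (RMul (RVar Y) (RVar N)))" for k i
  define \<theta> where "\<theta> k = RExists Y (rform_disj (map (E k) [0..<m]))" for k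
  \<comment> \<open>\<open>\<theta> k\<close> says x_k = f_i + y p for some i and y, where p is the value of variable N
    and f_i that of variable N + 1 + i.\<close>
  have P_carr: "P x \<in> carrier R" for x
    using p F(2) nth_mem[of "x - N - 1" fs] unfolding P_def m_def fs by auto
  have "rsat R (with_params N P e) (\<theta> k) \<longleftrightarrow> e k \<in> {x \<in> carrier R. \<exists>f\<in>F. x \<ominus> f \<in> PIdl p}"
    if k: "k < N" and e: "e k \<in> carrier R" for e k
  proof -
    let ?e = "with_params N P e"
    have E: "rsat R (?e(Y := y)) (E k i) \<longleftrightarrow> e k = fs ! i \<oplus> y \<otimes> p" if "i < m" for y i
      using k that unfolding E_def P_def Y_def with_params_def by simp
    have "rsat R ?e (\<theta> k) \<longleftrightarrow> (\<exists>y\<in>carrier R. \<exists>i<m. rsat R (?e(Y := y)) (E k i))"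
      unfolding \<theta>_def by (simp add: rsat_rform_disj Bex_def)
    also have "\<dots> \<longleftrightarrow> (\<exists>y\<in>carrier R. \<exists>i<m. e k = fs ! i \<oplus> y \<otimes> p)"
      using E by blast
    also have "\<dots> \<longleftrightarrow> (\<exists>f\<in>F. \<exists>y\<in>carrier R. e k = f \<oplus> y \<otimes> p)"
      unfolding fs[symmetric] m_def set_conv_nth by blast
    also have "\<dots> \<longleftrightarrow> e k \<in> {x \<in> carrier R. \<exists>f\<in>F. x \<ominus> f \<in> PIdl p}"
      using minus_mem_PIdl_iff[OF e subsetD[OF F(2)] p] e by auto
    finally show ?thesis .
  qed
  with P_carr show "\<exists>\<theta> P. (\<forall>x. P x \<in> carrier R) \<and> (\<forall>e k. k < N \<longrightarrow> e k \<in> carrier R \<longrightarrow>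
      rsat R (with_params N P e) (\<theta> k) = (e k \<in> {x \<in> carrier R. \<exists>f\<in>F. x \<ominus> f \<in> PIdl p}))"
    by blast
qed

lemma (in ring) subring_eq_union_cosets:
  assumes sub: "subring S R"
    and I: "additive_subgroup I R" "I \<subseteq> S" "finite_index R I"
  shows "\<exists>F. finite F \<and> F \<subseteq> S \<and> S = {x \<in> carrier R. \<exists>f\<in>F. x \<ominus> f \<in> I}"
proof -
  have S_carr: "S \<subseteq> carrier R" using subringE(1)[OF sub] .
  obtain F where F: "finite F" "F \<subseteq> S" "\<And>x. x \<in> S \<Longrightarrow> \<exists>f\<in>F. x \<ominus> f \<in> I"
    using finite_representatives_in_subset[OF I(1,3) S_carr] by blast
  have "x \<in> S" if x: "x \<in> carrier R" and f: "f \<in> F" "x \<ominus> f \<in> I" for x f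
  proof -
    have "f \<in> S" "f \<in> carrier R" using f(1) F(2) S_carr by auto
    moreover have "x = f \<oplus> (x \<ominus> f)" using x \<open>f \<in> carrier R\<close> by algebra
    ultimately show ?thesis using f(2) I(2) subringE(7)[OF sub] by (metis subsetD)
  qed
  then have "S = {x \<in> carrier R. \<exists>f\<in>F. x \<ominus> f \<in> I}" using F(3) S_carr by blast
  with F(1,2) show ?thesis by blast
qed

lemma (in principal_domain) conductor_eq_nonzero_PIdl:
  assumes inf: "infinite (carrier R)" and sub: "subring S R" and fin: "finite (a_rcosets S)"
  obtains p where "p \<in> carrier R" "p \<noteq> \<zero>" "conductor R S = PIdl p"
proof -
  obtain p where p: "p \<in> carrier R" "conductor R S = PIdl p"
    using exists_gen[OF conductor_ideal[OF sub]] by blast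
  have "p \<noteq> \<zero>"
  proof
    assume "p = \<zero>"
    then have "PIdl p \<subseteq> {\<zero>}" unfolding cgenideal_def by auto
    then show False
      using infinite_if_finite_index[OF finite_index_conductor[OF sub fin] inf] p(2) finite_subset
      by auto
  qed
  with p that show thesis by blast
qed

lemma (in principal_domain) dp_minimal_noetherian_finite_index_subring:
  assumes max: "\<And>m. maximalideal m R \<Longrightarrow> finite_index R m" and dp: "dp_minimal R"
    and sub: "subring S R" and fin: "finite (a_rcosets S)"
  shows "dp_minimal (R\<lparr>carrier := S\<rparr>) \<and> noetherian_ring (R\<lparr>carrier := S\<rparr>)"
proof -
  have inf: "infinite (carrier R)" and no_ict: "\<not> ict2 R"
    using dp unfolding dp_minimal_def by auto
  have S_index: "finite_index R S"
    using finite_index_if_finite_a_rcosets[OF subring_additive_subgroup[OF sub] fin] .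
  obtain p where p: "p \<in> carrier R" "p \<noteq> \<zero>" "conductor R S = PIdl p"
    using conductor_eq_nonzero_PIdl[OF inf sub fin] by blast
  have p_index: "finite_index R (PIdl p)"
    using finite_index_conductor[OF sub fin] p(3) by simp
  have p_S: "PIdl p \<subseteq> S" using conductor_subset p(3) by blast
  obtain F where F: "finite F" "F \<subseteq> S" "S = {x \<in> carrier R. \<exists>f\<in>F. x \<ominus> f \<in> PIdl p}"
    using subring_eq_union_cosets[OF sub ideal.axioms(1)[OF cgenideal_ideal[OF p(1)]] p_S p_index]
    by blast
  have "definable_with_params R S"
    using definable_with_params_PIdl_cosets[OF p(1) F(1)] F(2,3) subringE(1)[OF sub] by auto
  then have "\<not> ict2 (R\<lparr>carrier := S\<rparr>)"
    using ict2_if_ict2_definable_subring[OF sub] no_ict by blast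
  moreover have "infinite S" using infinite_if_finite_index[OF S_index inf] .
  moreover have "noetherian_ring (R\<lparr>carrier := S\<rparr>)"
    using noetherian_subring[OF max sub S_index p(1,2) p_S] .
  ultimately show ?thesis unfolding dp_minimal_def by simp
qed

theorem lemma8p7:
  fixes R :: "('a, 'b) ring_scheme" and S :: "'a set"
  assumes "mixed_char_DVR R" and "dp_minimal R" and "finite_index_subring S R"
  shows "dp_minimal (R\<lparr>carrier := S\<rparr>) \<and> noetherian_ring (R\<lparr>carrier := S\<rparr>)"
proof -
  have pid: "principal_domain R" and max_fin: "\<And>m. maximalideal m R \<Longrightarrow> finite (a_rcosets\<^bsub>R\<^esub> m)"
    using assms(1) unfolding mixed_char_DVR_def DVR_def by auto
  have max: "finite_index R m" if "maximalideal m R" for m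
    using ring.finite_index_if_finite_a_rcosets[OF _ ideal.axioms(1)[OF maximalideal.axioms(1)[OF that]]]
      max_fin[OF that] that maximalideal.axioms(1) ideal.axioms(2) by blast
  show ?thesis
    using principal_domain.dp_minimal_noetherian_finite_index_subring[OF pid max assms(2)] assms(3)
    unfolding finite_index_subring_def by blast
qed

end
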